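(* Let $k_1,k_2$ be positive integers with $k_1\ge k_2\ge 2$, and let $D$ be a digraph that has a Hamiltonian directed path and contains no subdivision of $C(k_1,k_2)$ as a subdigraph. Then $\chi(D)\le 3k_1$.
   Context: Digraphs are orientations of finite simple graphs (no loops, no multiple arcs, no pair of opposite arcs). The chromatic number $\chi(D)$ of a digraph is the chromatic number of its underlying undirected graph. For positive integers $k_1,k_2$, the two-blocks cycle $C(k_1,k_2)$ is the oriented cycle formed by two internally disjoint directed paths from a vertex $x$ to a vertex $y$, of lengths $k_1$ and $k_2$. A subdivision of a digraph $H$ is a digraph obtained from $H$ by replacing each arc $(u,v)$ by a directed $uv$-path of length at least $1$ (internally disjoint new paths). A Hamiltonian directed path is a directed path passing through all vertices. *)

theory Defs
  imports Main
begin

definition digraph :: "'a set \<Rightarrow> ('a \<times> 'a) set \<Rightarrow> bool" where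
  "digraph V A \<longleftrightarrow> finite V \<and> A \<subseteq> V \<times> V \<and> (\<forall>v. (v, v) \<notin> A)
     \<and> (\<forall>u v. (u, v) \<in> A \<longrightarrow> (v, u) \<notin> A)"

text \<open>Directed path given by its vertex sequence: distinct vertices, consecutive
  vertices joined by arcs. Its length is the number of arcs, length ps - 1.\<close>

definition dpath :: "('a \<times> 'a) set \<Rightarrow> 'a list \<Rightarrow> bool" where
  "dpath A ps \<longleftrightarrow> ps \<noteq> [] \<and> distinct ps \<and> (\<forall>i. Suc i < length ps \<longrightarrow> (ps ! i, ps ! Suc i) \<in> A)"

definition path_arcs :: "'a list \<Rightarrow> ('a \<times> 'a) set" where
  "path_arcs ps = {(ps ! i, ps ! Suc i) | i. Suc i < length ps}"

definition hamiltonian_dpath :: "'a set \<Rightarrow> ('a \<times> 'a) set \<Rightarrow> 'a list \<Rightarrow> bool" where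
  "hamiltonian_dpath V A ps \<longleftrightarrow> dpath A ps \<and> set ps = V"

definition inner :: "'a list \<Rightarrow> 'a set" where
  "inner ps = set (butlast (tl ps))"

definition contains_subdivision ::
  "'a set \<Rightarrow> ('a \<times> 'a) set \<Rightarrow> 'b set \<Rightarrow> ('b \<times> 'b) set \<Rightarrow> bool" where
  "contains_subdivision V A HV HA \<longleftrightarrow>
     (\<exists>(f :: 'b \<Rightarrow> 'a) (P :: 'b \<times> 'b \<Rightarrow> 'a list).
        inj_on f HV \<and> f ` HV \<subseteq> V \<and>
        (\<forall>e \<in> HA. dpath A (P e) \<and> length (P e) \<ge> 2 \<and> set (P e) \<subseteq> V \<and>
                    hd (P e) = f (fst e) \<and> last (P e) = f (snd e)) \<and>
        (\<forall>e \<in> HA. inner (P e) \<inter> f ` HV = {}) \<and>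
        (\<forall>e \<in> HA. \<forall>e' \<in> HA. e \<noteq> e' \<longrightarrow> inner (P e) \<inter> set (P e') = {}))"

text \<open>The two-blocks cycle C(k1,k2) on vertex set {0..k1+k2-1}: x = 0, y = 1,
  first block 0 \<rightarrow> 2 \<rightarrow> 3 \<rightarrow> ... \<rightarrow> k1 \<rightarrow> 1 (length k1),
  second block 0 \<rightarrow> k1+1 \<rightarrow> ... \<rightarrow> k1+k2-1 \<rightarrow> 1 (length k2).\<close>

definition tb_block1 :: "nat \<Rightarrow> nat list" where
  "tb_block1 k1 = [0] @ [2..<k1 + 1] @ [1]"

definition tb_block2 :: "nat \<Rightarrow> nat \<Rightarrow> nat list" where
  "tb_block2 k1 k2 = [0] @ [k1 + 1..<k1 + k2] @ [1]"

definition two_blocks_V :: "nat \<Rightarrow> nat \<Rightarrow> nat set" where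
  "two_blocks_V k1 k2 = set (tb_block1 k1) \<union> set (tb_block2 k1 k2)"

definition two_blocks_A :: "nat \<Rightarrow> nat \<Rightarrow> (nat \<times> nat) set" where
  "two_blocks_A k1 k2 = path_arcs (tb_block1 k1) \<union> path_arcs (tb_block2 k1 k2)"

definition proper_colouring :: "'a set \<Rightarrow> ('a \<times> 'a) set \<Rightarrow> nat \<Rightarrow> ('a \<Rightarrow> nat) \<Rightarrow> bool" where
  "proper_colouring V A k c \<longleftrightarrow> c ` V \<subseteq> {..<k} \<and> (\<forall>(u, v) \<in> A. c u \<noteq> c v)"

definition chromatic_number :: "'a set \<Rightarrow> ('a \<times> 'a) set \<Rightarrow> nat" where
  "chromatic_number V A = (LEAST k. \<exists>c. proper_colouring V A k c)"

end

theory Submission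
  imports Defs
begin

text \<open>Number the vertices along the Hamiltonian path \<open>P\<close> and split them into the \<open>k1\<close>
  residue classes of their positions modulo \<open>k1\<close>; two vertices of one class are at distance
  at least \<open>k1\<close> along \<open>P\<close>. If arcs joined positions \<open>a, c\<close> and \<open>b, d\<close> of one class with
  \<open>a < b < c < d\<close>, then these two arcs together with the subpaths \<open>P[a, b]\<close> and \<open>P[c, d]\<close>
  would form two internally disjoint directed paths of length greater than \<open>k1\<close> with common
  ends, and cutting them into \<open>k1\<close> resp. \<open>k2\<close> pieces gives a subdivision of \<open>C(k1, k2)\<close>.
  So inside each class no two arcs cross with respect to the order along \<open>P\<close>. Such an
  outerplanar-like graph has a vertex of degree at most two (the first vertex spanned by a
  shortest spanning arc), hence is 3-colourable, and the \<open>k1\<close> classes together need at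
  most \<open>3 k1\<close> colours.\<close>

definition segment :: "'a list \<Rightarrow> nat \<Rightarrow> nat \<Rightarrow> 'a list" where
  "segment xs i j = map (nth xs) [i..<Suc j]"

lemma length_segment: "length (segment xs i j) = Suc j - i"
  by (simp add: segment_def del: upt_Suc)

lemma nth_segment: "t < Suc j - i \<Longrightarrow> segment xs i j ! t = xs ! (i + t)"
  by (simp add: segment_def del: upt_Suc)

lemma set_segment: "set (segment xs i j) = nth xs ` {i..j}"
  by (auto simp: segment_def)

lemma segment_not_Nil: "i \<le> j \<Longrightarrow> segment xs i j \<noteq> []"
  by (simp add: segment_def)

lemma hd_segment: "i \<le> j \<Longrightarrow> hd (segment xs i j) = xs ! i"
  by (simp add: segment_def upt_rec)

lemma last_segment: "i \<le> j \<Longrightarrow> last (segment xs i j) = xs ! j"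
  by (simp add: segment_def)

lemma set_tl_segment: "set (tl (segment xs i j)) = nth xs ` {i<..j}"
proof -
  have "tl (segment xs i j) = map (nth xs) [Suc i..<Suc j]"
    unfolding segment_def by (simp add: map_tl[symmetric] del: upt_Suc)
  then show ?thesis by auto
qed

lemma set_butlast_segment: "set (butlast (segment xs i j)) = nth xs ` {i..<j}"
proof -
  have "butlast (segment xs i j) = map (nth xs) [i..<j]"
    unfolding segment_def by (cases "i \<le> j") (simp_all add: map_butlast[symmetric])
  then show ?thesis by auto
qed

lemma inner_conv_nth: "inner xs = nth xs ` {0<..<length xs - 1}"
proof -
  have "butlast (tl xs) = map (nth xs) [1..<length xs - 1]"
    by (rule nth_equalityI) (auto simp: nth_butlast nth_tl)
  then show ?thesis
    by (auto simp: inner_def)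
qed

lemma inner_segment: "i \<le> j \<Longrightarrow> inner (segment xs i j) = nth xs ` {i<..<j}"
proof -
  assume "i \<le> j"
  have "tl (segment xs i j) = map (nth xs) [Suc i..<Suc j]"
    unfolding segment_def by (simp add: map_tl[symmetric] del: upt_Suc)
  then have "butlast (tl (segment xs i j)) = map (nth xs) [Suc i..<j]"
    using \<open>i \<le> j\<close> by (simp add: map_butlast[symmetric])
  then show ?thesis
    by (auto simp: inner_def)
qed

lemma inner_Cons: "inner (x # xs) = set (butlast xs)"
  by (simp add: inner_def)

lemma inner_snoc: "xs \<noteq> [] \<Longrightarrow> inner (xs @ [x]) = set (tl xs)"
  by (cases xs) (auto simp: inner_def)

lemma inner_Cons_snoc: "inner (x # xs @ [y]) = set xs"
  by (simp add: inner_def)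

lemma dpath_singleton: "dpath A [x]"
  by (simp add: dpath_def)

lemma dpath_segment:
  assumes "dpath A xs" "i \<le> j" "j < length xs"
  shows "dpath A (segment xs i j)"
proof -
  have "distinct xs"
    using assms(1) by (simp add: dpath_def)
  then have "distinct (segment xs i j)"
    using assms(3) by (auto simp: segment_def distinct_map intro!: inj_on_nth)
  moreover have "(segment xs i j ! t, segment xs i j ! Suc t) \<in> A"
    if "Suc t < length (segment xs i j)" for t
    using that assms by (simp add: dpath_def length_segment nth_segment)
  ultimately show ?thesis
    using assms(2) by (simp add: dpath_def segment_not_Nil)
qed

lemma dpath_append:
  assumes "dpath A xs" "dpath A ys" "(last xs, hd ys) \<in> A" "set xs \<inter> set ys = {}"
  shows "dpath A (xs @ ys)"
proof -
  have "((xs @ ys) ! t, (xs @ ys) ! Suc t) \<in> A" if "Suc t < length (xs @ ys)" for t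
  proof -
    consider "Suc t < length xs" | "Suc t = length xs" | "length xs \<le> t" by linarith
    then show ?thesis
    proof cases
      case 1
      then show ?thesis using assms(1) by (simp add: nth_append dpath_def)
    next
      case 2
      then have "xs ! t = last xs"
        by (metis diff_Suc_1 last_conv_nth list.size(3) nat.distinct(1))
      moreover have "ys ! 0 = hd ys"
        using that 2 by (simp add: hd_conv_nth)
      ultimately show ?thesis using 2 assms(3) by (simp add: nth_append)
    next
      case 3
      then show ?thesis
        using assms(2) that by (simp add: dpath_def nth_append Suc_diff_le)
    qed
  qed
  then show ?thesis using assms by (auto simp: dpath_def)
qed

lemma distinct_nth_image_Int:
  assumes "distinct xs" "X \<subseteq> {..<length xs}" "Y \<subseteq> {..<length xs}"
  shows "nth xs ` X \<inter> nth xs ` Y = nth xs ` (X \<inter> Y)"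
  using assms inj_on_nth[of xs "{..<length xs}"] by (simp add: inj_on_image_Int)

section \<open>Two internally disjoint paths contain a subdivision of \<open>C(k1, k2)\<close>\<close>

locale subdivided_path =
  fixes A :: "('a \<times> 'a) set" and Q :: "'a list" and k :: nat
  assumes dpath: "dpath A Q" and k_pos: "0 < k" and k_less_length: "k < length Q"
begin

definition breakpoint :: "nat \<Rightarrow> nat" where
  "breakpoint i = (if i = k then length Q - 1 else i)"

definition piece :: "nat \<Rightarrow> 'a list" where
  "piece i = segment Q (breakpoint i) (breakpoint (Suc i))"

lemma distinct: "distinct Q"
  using dpath by (simp add: dpath_def)

lemma breakpoint_0 [simp]: "breakpoint 0 = 0"
  using k_pos by (simp add: breakpoint_def)

lemma breakpoint_k [simp]: "breakpoint k = length Q - 1"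
  by (simp add: breakpoint_def)

lemma breakpoint_less_length: "i \<le> k \<Longrightarrow> breakpoint i < length Q"
  using k_less_length by (auto simp: breakpoint_def)

lemma breakpoint_strict_mono: "i < j \<Longrightarrow> j \<le> k \<Longrightarrow> breakpoint i < breakpoint j"
  using k_less_length by (auto simp: breakpoint_def)

lemma breakpoint_mono: "i \<le> j \<Longrightarrow> j \<le> k \<Longrightarrow> breakpoint i \<le> breakpoint j"
  using breakpoint_strict_mono by (cases "i = j") (auto intro: less_imp_le)

lemma breakpoint_vertex_eq_iff:
  assumes "i \<le> k" "j \<le> k"
  shows "Q ! breakpoint i = Q ! breakpoint j \<longleftrightarrow> i = j"
proof -
  have "Q ! breakpoint i = Q ! breakpoint j \<longleftrightarrow> breakpoint i = breakpoint j"
    using assms distinct breakpoint_less_length by (simp add: nth_eq_iff_index_eq)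
  also have "\<dots> \<longleftrightarrow> i = j"
    using assms breakpoint_strict_mono by (metis less_irrefl linorder_neqE_nat)
  finally show ?thesis .
qed

lemma breakpoint_vertex_in_inner: "0 < j \<Longrightarrow> j < k \<Longrightarrow> Q ! breakpoint j \<in> inner Q"
  using k_less_length by (auto simp: inner_conv_nth breakpoint_def)

lemma piece_dpath: "i < k \<Longrightarrow> dpath A (piece i)"
  using breakpoint_strict_mono[of i "Suc i"] breakpoint_less_length[of "Suc i"]
  by (simp add: piece_def dpath_segment dpath)

lemma length_piece: "i < k \<Longrightarrow> 2 \<le> length (piece i)"
  using breakpoint_strict_mono[of i "Suc i"] by (simp add: piece_def length_segment)

lemma hd_piece: "i < k \<Longrightarrow> hd (piece i) = Q ! breakpoint i"
  using breakpoint_strict_mono[of i "Suc i"] by (simp add: piece_def hd_segment)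

lemma last_piece: "i < k \<Longrightarrow> last (piece i) = Q ! breakpoint (Suc i)"
  using breakpoint_strict_mono[of i "Suc i"] by (simp add: piece_def last_segment)

lemma set_piece: "set (piece i) = nth Q ` {breakpoint i..breakpoint (Suc i)}"
  by (simp add: piece_def set_segment)

lemma inner_piece: "i < k \<Longrightarrow> inner (piece i) = nth Q ` {breakpoint i<..<breakpoint (Suc i)}"
  using breakpoint_strict_mono[of i "Suc i"] by (simp add: piece_def inner_segment)

lemma set_piece_subset: "i < k \<Longrightarrow> set (piece i) \<subseteq> set Q"
  using breakpoint_less_length[of "Suc i"] by (auto simp: set_piece)

lemma inner_piece_subset: "i < k \<Longrightarrow> inner (piece i) \<subseteq> inner Q"
  unfolding inner_conv_nth[of Q] using breakpoint_mono[of "Suc i" k] by (auto simp: inner_piece)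

lemma inner_piece_Int_piece:
  assumes "i < k" "i' < k" "i \<noteq> i'"
  shows "inner (piece i) \<inter> set (piece i') = {}"
proof -
  have "{breakpoint i<..<breakpoint (Suc i)} \<inter> {breakpoint i'..breakpoint (Suc i')} = {}"
    using assms breakpoint_mono[of "Suc i" i'] breakpoint_mono[of "Suc i'" i]
    by (cases "i < i'") auto
  moreover have "{breakpoint i<..<breakpoint (Suc i)} \<subseteq> {..<length Q}"
    "{breakpoint i'..breakpoint (Suc i')} \<subseteq> {..<length Q}"
    using assms breakpoint_less_length[of "Suc i"] breakpoint_less_length[of "Suc i'"] by auto
  ultimately show ?thesis
    using assms distinct by (simp add: inner_piece set_piece distinct_nth_image_Int)
qed

lemma breakpoint_vertex_notin_inner_piece:
  assumes "i < k" "j \<le> k"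
  shows "Q ! breakpoint j \<notin> inner (piece i)"
proof
  assume "Q ! breakpoint j \<in> inner (piece i)"
  then obtain t where t: "breakpoint i < t" "t < breakpoint (Suc i)" "Q ! breakpoint j = Q ! t"
    using assms by (auto simp: inner_piece)
  then have "breakpoint j = t"
    using assms distinct breakpoint_less_length[of j] breakpoint_less_length[of "Suc i"]
    by (simp add: nth_eq_iff_index_eq)
  then show False
    using assms t breakpoint_mono[of j i] breakpoint_mono[of "Suc i" j] by (cases "j \<le> i") auto
qed

end

lemma length_tb_block1: "0 < k1 \<Longrightarrow> length (tb_block1 k1) = Suc k1"
  by (auto simp: tb_block1_def)

lemma length_tb_block2: "0 < k2 \<Longrightarrow> length (tb_block2 k1 k2) = Suc k2"
  by (simp add: tb_block2_def)

lemma nth_tb_block1: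
  "0 < k1 \<Longrightarrow> i \<le> k1 \<Longrightarrow> tb_block1 k1 ! i = (if i = 0 then 0 else if i < k1 then Suc i else 1)"
  by (auto simp: tb_block1_def nth_append nth_Cons split: nat.splits)

lemma nth_tb_block2:
  "0 < k2 \<Longrightarrow> i \<le> k2 \<Longrightarrow> tb_block2 k1 k2 ! i = (if i = 0 then 0 else if i < k2 then k1 + i else 1)"
  by (auto simp: tb_block2_def nth_append nth_Cons split: nat.splits)

lemma path_arcs_conv_nth: "path_arcs xs = (\<lambda>i. (xs ! i, xs ! Suc i)) ` {..<length xs - 1}"
  by (auto simp: path_arcs_def)

lemma two_blocks_V_conv_nth:
  "0 < k1 \<Longrightarrow> 0 < k2 \<Longrightarrow>
    two_blocks_V k1 k2 = nth (tb_block1 k1) ` {..k1} \<union> nth (tb_block2 k1 k2) ` {..k2}"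
  by (auto simp: two_blocks_V_def set_conv_nth length_tb_block1 length_tb_block2)

lemma two_blocks_A_conv_nth:
  "0 < k1 \<Longrightarrow> 0 < k2 \<Longrightarrow>
    two_blocks_A k1 k2 = (\<lambda>i. (tb_block1 k1 ! i, tb_block1 k1 ! Suc i)) ` {..<k1}
      \<union> (\<lambda>j. (tb_block2 k1 k2 ! j, tb_block2 k1 k2 ! Suc j)) ` {..<k2}"
  by (simp add: two_blocks_A_def path_arcs_conv_nth length_tb_block1 length_tb_block2)

lemma tb_block_arcs_differ:
  assumes "2 \<le> k1" "0 < k2" "i < k1" "j < k2"
  shows "(tb_block1 k1 ! i, tb_block1 k1 ! Suc i) \<noteq> (tb_block2 k1 k2 ! j, tb_block2 k1 k2 ! Suc j)"
  using assms by (auto simp: nth_tb_block1 nth_tb_block2)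

locale internally_disjoint_paths =
  P1: subdivided_path A Q1 k1 + P2: subdivided_path A Q2 k2
  for A :: "('a \<times> 'a) set" and Q1 k1 Q2 k2 +
  assumes hd_eq: "hd Q1 = hd Q2" and last_eq: "last Q1 = last Q2"
    and k1_ge_2: "2 \<le> k1"
    and inner_Int_set: "inner Q1 \<inter> set Q2 = {}" and set_Int_inner: "set Q1 \<inter> inner Q2 = {}"
begin

abbreviation "B1 \<equiv> tb_block1 k1"
abbreviation "B2 \<equiv> tb_block2 k1 k2"

text \<open>A vertex \<open>m \<notin> {0, 1}\<close> of \<open>C(k1, k2)\<close> sits at position \<open>m - 1\<close> of \<open>B1\<close> if \<open>m \<le> k1\<close>
  and at position \<open>m - k1\<close> of \<open>B2\<close> otherwise. In \<open>route\<close> the same truncated subtractions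
  also send the arcs leaving vertex \<open>0\<close> to position \<open>0\<close>.\<close>

definition embed :: "nat \<Rightarrow> 'a" where
  "embed m = (if m = 0 then hd Q1 else if m = 1 then last Q1
     else if m \<le> k1 then Q1 ! (m - 1) else Q2 ! (m - k1))"

definition route :: "nat \<times> nat \<Rightarrow> 'a list" where
  "route e = (if e \<in> path_arcs B1 then P1.piece (fst e - 1) else P2.piece (fst e - k1))"

lemma not_Nil: "Q1 \<noteq> []" "Q2 \<noteq> []"
  using P1.k_less_length P2.k_less_length by auto

lemma hd_conv_breakpoint: "hd Q1 = Q1 ! P1.breakpoint 0" "hd Q2 = Q2 ! P2.breakpoint 0"
  using not_Nil by (simp_all add: hd_conv_nth)

lemma last_conv_breakpoint: "last Q1 = Q1 ! P1.breakpoint k1" "last Q2 = Q2 ! P2.breakpoint k2"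
  using not_Nil by (simp_all add: last_conv_nth)

lemma embed_B1: "i \<le> k1 \<Longrightarrow> embed (B1 ! i) = Q1 ! P1.breakpoint i"
  using k1_ge_2 hd_conv_breakpoint last_conv_breakpoint
  by (auto simp: embed_def nth_tb_block1 P1.breakpoint_def)

lemma embed_B2: "j \<le> k2 \<Longrightarrow> embed (B2 ! j) = Q2 ! P2.breakpoint j"
  using k1_ge_2 P2.k_pos hd_eq last_eq hd_conv_breakpoint last_conv_breakpoint
  by (auto simp: embed_def nth_tb_block2 P2.breakpoint_def)

lemma arc_cases:
  assumes "e \<in> two_blocks_A k1 k2"
  obtains (B1) i where "i < k1" "e = (B1 ! i, B1 ! Suc i)" "embed (fst e) = Q1 ! P1.breakpoint i"
      "embed (snd e) = Q1 ! P1.breakpoint (Suc i)" "route e = P1.piece i"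
  | (B2) j where "j < k2" "e = (B2 ! j, B2 ! Suc j)" "embed (fst e) = Q2 ! P2.breakpoint j"
      "embed (snd e) = Q2 ! P2.breakpoint (Suc j)" "route e = P2.piece j"
proof -
  have "0 < k1" using k1_ge_2 by simp
  from assms consider (B1) i where "i < k1" "e = (B1 ! i, B1 ! Suc i)"
    | (B2) j where "j < k2" "e = (B2 ! j, B2 ! Suc j)"
    using two_blocks_A_conv_nth[OF \<open>0 < k1\<close> P2.k_pos] by auto
  then show ?thesis
  proof cases
    case (B1 i)
    then have "e \<in> path_arcs B1"
      using \<open>0 < k1\<close> by (auto simp: path_arcs_conv_nth length_tb_block1)
    moreover have "fst e - 1 = i"
      using B1 by (auto simp: nth_tb_block1)
    ultimately show ?thesis
      using B1 that(1)[of i] by (simp add: embed_B1 route_def)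
  next
    case (B2 j)
    have "e \<notin> path_arcs B1"
    proof
      assume "e \<in> path_arcs B1"
      then obtain i where "i < k1" "e = (B1 ! i, B1 ! Suc i)"
        using \<open>0 < k1\<close> by (auto simp: path_arcs_conv_nth length_tb_block1)
      then show False
        using B2 tb_block_arcs_differ[OF k1_ge_2 P2.k_pos \<open>i < k1\<close> B2(1)] by simp
    qed
    moreover have "fst e - k1 = j"
      using B2 P2.k_pos by (auto simp: nth_tb_block2)
    ultimately show ?thesis
      using B2 that(2)[of j] by (simp add: embed_B2 route_def)
  qed
qed

lemma embed_image:
  "embed ` two_blocks_V k1 k2 = (\<lambda>i. Q1 ! P1.breakpoint i) ` {..k1} \<union> (\<lambda>j. Q2 ! P2.breakpoint j) ` {..k2}"
proof -
  have "embed ` nth B1 ` {..k1} = (\<lambda>i. Q1 ! P1.breakpoint i) ` {..k1}"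
    unfolding image_image by (rule image_cong) (simp_all add: embed_B1)
  moreover have "embed ` nth B2 ` {..k2} = (\<lambda>j. Q2 ! P2.breakpoint j) ` {..k2}"
    unfolding image_image by (rule image_cong) (simp_all add: embed_B2)
  ultimately show ?thesis
    using P1.k_pos P2.k_pos by (simp add: two_blocks_V_conv_nth image_Un)
qed

lemma breakpoint_vertices_eq:
  assumes "i \<le> k1" "j \<le> k2" "Q1 ! P1.breakpoint i = Q2 ! P2.breakpoint j"
  shows "B1 ! i = B2 ! j"
proof -
  consider "j = 0" | "j = k2" | "0 < j" "j < k2"
    using assms(2) by linarith
  then show ?thesis
  proof cases
    case 1
    then have "i = 0"
      using assms hd_eq hd_conv_breakpoint P1.breakpoint_vertex_eq_iff[of i 0] by simp
    then show ?thesis using 1 P1.k_pos P2.k_pos by (simp add: nth_tb_block1 nth_tb_block2)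
  next
    case 2
    then have "i = k1"
      using assms last_eq last_conv_breakpoint P1.breakpoint_vertex_eq_iff[of i k1] by simp
    then show ?thesis using 2 P1.k_pos P2.k_pos by (simp add: nth_tb_block1 nth_tb_block2)
  next
    case 3
    then have "Q2 ! P2.breakpoint j \<in> set Q1 \<inter> inner Q2"
      using assms P1.breakpoint_less_length P2.breakpoint_vertex_in_inner
      by (metis IntI nth_mem)
    then show ?thesis using set_Int_inner by blast
  qed
qed

lemma inj_on_embed: "inj_on embed (two_blocks_V k1 k2)"
proof (rule inj_onI)
  fix u v assume "u \<in> two_blocks_V k1 k2" "v \<in> two_blocks_V k1 k2" and eq: "embed u = embed v"
  then consider
      (B1_B1) i i' where "i \<le> k1" "i' \<le> k1" "u = B1 ! i" "v = B1 ! i'"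
    | (B1_B2) i j where "i \<le> k1" "j \<le> k2" "u = B1 ! i" "v = B2 ! j"
    | (B2_B1) j i where "j \<le> k2" "i \<le> k1" "u = B2 ! j" "v = B1 ! i"
    | (B2_B2) j j' where "j \<le> k2" "j' \<le> k2" "u = B2 ! j" "v = B2 ! j'"
    using P1.k_pos P2.k_pos by (auto simp: two_blocks_V_conv_nth)
  then show "u = v"
  proof cases
    case B1_B1
    then show ?thesis using eq by (simp add: embed_B1 P1.breakpoint_vertex_eq_iff)
  next
    case B1_B2
    then show ?thesis using eq by (simp add: embed_B1 embed_B2 breakpoint_vertices_eq)
  next
    case B2_B1
    then show ?thesis using eq by (simp add: embed_B1 embed_B2 breakpoint_vertices_eq)
  next
    case B2_B2
    then show ?thesis using eq by (simp add: embed_B2 P2.breakpoint_vertex_eq_iff)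
  qed
qed

lemma embed_image_subset: "embed ` two_blocks_V k1 k2 \<subseteq> set Q1 \<union> set Q2"
  using P1.breakpoint_less_length P2.breakpoint_less_length by (auto simp: embed_image)

lemma route_dpath:
  assumes "e \<in> two_blocks_A k1 k2"
  shows "dpath A (route e) \<and> 2 \<le> length (route e) \<and> set (route e) \<subseteq> set Q1 \<union> set Q2
    \<and> hd (route e) = embed (fst e) \<and> last (route e) = embed (snd e)"
  using assms
proof (cases rule: arc_cases)
  case (B1 i)
  then show ?thesis
    using P1.piece_dpath P1.length_piece P1.set_piece_subset P1.hd_piece P1.last_piece by auto
next
  case (B2 j)
  then show ?thesis
    using P2.piece_dpath P2.length_piece P2.set_piece_subset P2.hd_piece P2.last_piece by auto
qed

lemma inner_route_Int_embed:
  assumes "e \<in> two_blocks_A k1 k2"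
  shows "inner (route e) \<inter> embed ` two_blocks_V k1 k2 = {}"
  using assms
proof (cases rule: arc_cases)
  case (B1 i)
  have "inner (route e) \<inter> (\<lambda>i. Q1 ! P1.breakpoint i) ` {..k1} = {}"
    using B1 P1.breakpoint_vertex_notin_inner_piece by auto
  moreover have "inner (route e) \<inter> (\<lambda>j. Q2 ! P2.breakpoint j) ` {..k2} = {}"
  proof -
    have "inner (route e) \<subseteq> inner Q1"
      using B1 P1.inner_piece_subset by simp
    moreover have "(\<lambda>j. Q2 ! P2.breakpoint j) ` {..k2} \<subseteq> set Q2"
      using P2.breakpoint_less_length by auto
    ultimately show ?thesis
      using inner_Int_set by blast
  qed
  ultimately show ?thesis
    by (simp add: embed_image Int_Un_distrib)
next
  case (B2 j)
  have "inner (route e) \<inter> (\<lambda>j. Q2 ! P2.breakpoint j) ` {..k2} = {}"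
    using B2 P2.breakpoint_vertex_notin_inner_piece by auto
  moreover have "inner (route e) \<inter> (\<lambda>i. Q1 ! P1.breakpoint i) ` {..k1} = {}"
  proof -
    have "inner (route e) \<subseteq> inner Q2"
      using B2 P2.inner_piece_subset by simp
    moreover have "(\<lambda>i. Q1 ! P1.breakpoint i) ` {..k1} \<subseteq> set Q1"
      using P1.breakpoint_less_length by auto
    ultimately show ?thesis
      using set_Int_inner by blast
  qed
  ultimately show ?thesis
    by (simp add: embed_image Int_Un_distrib)
qed

lemma inner_route_Int_route:
  assumes "e \<in> two_blocks_A k1 k2" "e' \<in> two_blocks_A k1 k2" "e \<noteq> e'"
  shows "inner (route e) \<inter> set (route e') = {}"
  using assms(1)
proof (cases rule: arc_cases)
  case e: (B1 i)
  from assms(2) show ?thesis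
  proof (cases rule: arc_cases)
    case (B1 i')
    then have "i \<noteq> i'" using e assms(3) by auto
    then show ?thesis using e B1 P1.inner_piece_Int_piece by simp
  next
    case (B2 j')
    then show ?thesis
      using e P1.inner_piece_subset[of i] P2.set_piece_subset[of j'] inner_Int_set by auto
  qed
next
  case e: (B2 j)
  from assms(2) show ?thesis
  proof (cases rule: arc_cases)
    case (B1 i')
    then show ?thesis
      using e P2.inner_piece_subset[of j] P1.set_piece_subset[of i'] set_Int_inner by auto
  next
    case (B2 j')
    then have "j \<noteq> j'" using e assms(3) by auto
    then show ?thesis using e B2 P2.inner_piece_Int_piece by simp
  qed
qed

lemma contains_two_blocks:
  assumes "set Q1 \<subseteq> V" "set Q2 \<subseteq> V"
  shows "contains_subdivision V A (two_blocks_V k1 k2) (two_blocks_A k1 k2)"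
proof -
  have "embed ` two_blocks_V k1 k2 \<subseteq> V"
    using embed_image_subset assms by blast
  moreover have "set (route e) \<subseteq> V" if "e \<in> two_blocks_A k1 k2" for e
    using route_dpath[OF that] assms by blast
  ultimately show ?thesis
    unfolding contains_subdivision_def
    using inj_on_embed route_dpath inner_route_Int_embed inner_route_Int_route
    by (intro exI[of _ embed] exI[of _ route]) simp
qed

end

section \<open>Crossing arcs along a directed path\<close>

locale spread_positions =
  fixes A :: "('a \<times> 'a) set" and ps :: "'a list" and k1 k2 a b c d :: nat
  assumes dpath: "dpath A ps"
    and order: "a < b" "b < c" "c < d" "d < length ps"
    and spread: "k1 \<le> b - a" "k1 \<le> d - c"
    and k_bounds: "2 \<le> k1" "0 < k2" "k2 \<le> k1"
begin

lemma distinct: "distinct ps"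
  using dpath by (simp add: dpath_def)

lemma dpath_segment_ab: "dpath A (segment ps a b)"
  and dpath_segment_cd: "dpath A (segment ps c d)"
  using dpath_segment[OF dpath] order by auto

lemma two_blocks_if_index_paths:
  assumes "dpath A Q1" "dpath A Q2" "hd Q1 = hd Q2" "last Q1 = last Q2"
    and "k1 < length Q1" "k1 < length Q2"
    and "set Q1 = nth ps ` S1" "set Q2 = nth ps ` S2" "inner Q1 = nth ps ` T1" "inner Q2 = nth ps ` T2"
    and "S1 \<union> S2 \<union> T1 \<union> T2 \<subseteq> {..<length ps}" "T1 \<inter> S2 = {}" "S1 \<inter> T2 = {}"
  shows "contains_subdivision (set ps) A (two_blocks_V k1 k2) (two_blocks_A k1 k2)"
proof -
  have "inner Q1 \<inter> set Q2 = {}" "set Q1 \<inter> inner Q2 = {}"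
    using assms(7-) distinct by (simp_all add: distinct_nth_image_Int)
  then interpret internally_disjoint_paths A Q1 k1 Q2 k2
    using assms(1-6) k_bounds by unfold_locales auto
  show ?thesis
    using assms(7,8,11) by (intro contains_two_blocks) auto
qed

lemma two_blocks_if_arcs_ac_bd:
  assumes "(ps ! a, ps ! c) \<in> A" "(ps ! b, ps ! d) \<in> A"
  shows "contains_subdivision (set ps) A (two_blocks_V k1 k2) (two_blocks_A k1 k2)"
proof (rule two_blocks_if_index_paths)
  let ?Q1 = "segment ps a b @ [ps ! d]" and ?Q2 = "[ps ! a] @ segment ps c d"
  show "dpath A ?Q1"
    using assms order distinct
    by (intro dpath_append dpath_segment_ab dpath_singleton)
      (auto simp: last_segment set_segment nth_eq_iff_index_eq)
  show "dpath A ?Q2"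
    using assms order distinct
    by (intro dpath_append dpath_segment_cd dpath_singleton)
      (auto simp: hd_segment set_segment nth_eq_iff_index_eq)
  show "hd ?Q1 = hd ?Q2" "last ?Q1 = last ?Q2" "k1 < length ?Q1" "k1 < length ?Q2"
    using order spread by (auto simp: hd_segment last_segment segment_not_Nil length_segment)
  show "set ?Q1 = nth ps ` ({a..b} \<union> {d})" "set ?Q2 = nth ps ` ({a} \<union> {c..d})"
    "inner ?Q1 = nth ps ` {a<..b}" "inner ?Q2 = nth ps ` {c..<d}"
    using order by (auto simp: set_segment inner_snoc set_tl_segment segment_not_Nil
        inner_Cons set_butlast_segment)
  show "({a..b} \<union> {d}) \<union> ({a} \<union> {c..d}) \<union> {a<..b} \<union> {c..<d} \<subseteq> {..<length ps}"
    "{a<..b} \<inter> ({a} \<union> {c..d}) = {}" "({a..b} \<union> {d}) \<inter> {c..<d} = {}"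
    using order by auto
qed

lemma two_blocks_if_arcs_ca_db:
  assumes "(ps ! c, ps ! a) \<in> A" "(ps ! d, ps ! b) \<in> A"
  shows "contains_subdivision (set ps) A (two_blocks_V k1 k2) (two_blocks_A k1 k2)"
proof (rule two_blocks_if_index_paths)
  let ?Q1 = "[ps ! c] @ segment ps a b" and ?Q2 = "segment ps c d @ [ps ! b]"
  show "dpath A ?Q1"
    using assms order distinct
    by (intro dpath_append dpath_segment_ab dpath_singleton)
      (auto simp: hd_segment set_segment nth_eq_iff_index_eq)
  show "dpath A ?Q2"
    using assms order distinct
    by (intro dpath_append dpath_segment_cd dpath_singleton)
      (auto simp: last_segment set_segment nth_eq_iff_index_eq)
  show "hd ?Q1 = hd ?Q2" "last ?Q1 = last ?Q2" "k1 < length ?Q1" "k1 < length ?Q2"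
    using order spread by (auto simp: hd_segment last_segment segment_not_Nil length_segment)
  show "set ?Q1 = nth ps ` ({c} \<union> {a..b})" "set ?Q2 = nth ps ` ({c..d} \<union> {b})"
    "inner ?Q1 = nth ps ` {a..<b}" "inner ?Q2 = nth ps ` {c<..d}"
    using order by (auto simp: set_segment inner_snoc set_tl_segment segment_not_Nil
        inner_Cons set_butlast_segment)
  show "({c} \<union> {a..b}) \<union> ({c..d} \<union> {b}) \<union> {a..<b} \<union> {c<..d} \<subseteq> {..<length ps}"
    "{a..<b} \<inter> ({c..d} \<union> {b}) = {}" "({c} \<union> {a..b}) \<inter> {c<..d} = {}"
    using order by auto
qed

lemma two_blocks_if_arcs_ac_db:
  assumes "(ps ! a, ps ! c) \<in> A" "(ps ! d, ps ! b) \<in> A"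
  shows "contains_subdivision (set ps) A (two_blocks_V k1 k2) (two_blocks_A k1 k2)"
proof (rule two_blocks_if_index_paths)
  let ?Q1 = "[ps ! a] @ segment ps c d @ [ps ! b]" and ?Q2 = "segment ps a b"
  have "dpath A (segment ps c d @ [ps ! b])"
    using assms order distinct
    by (intro dpath_append dpath_segment_cd dpath_singleton)
      (auto simp: last_segment set_segment nth_eq_iff_index_eq)
  then show "dpath A ?Q1"
    using assms order distinct
    by (intro dpath_append[OF dpath_singleton])
      (auto simp: hd_segment set_segment segment_not_Nil nth_eq_iff_index_eq)
  show "dpath A ?Q2"
    by (rule dpath_segment_ab)
  show "hd ?Q1 = hd ?Q2" "last ?Q1 = last ?Q2" "k1 < length ?Q1" "k1 < length ?Q2"
    using order spread by (auto simp: hd_segment last_segment segment_not_Nil length_segment)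
  show "set ?Q1 = nth ps ` ({a} \<union> {c..d} \<union> {b})" "set ?Q2 = nth ps ` {a..b}"
    "inner ?Q1 = nth ps ` {c..d}" "inner ?Q2 = nth ps ` {a<..<b}"
    using order by (auto simp: set_segment inner_segment inner_Cons_snoc[of _ "segment _ _ _", simplified])
  show "({a} \<union> {c..d} \<union> {b}) \<union> {a..b} \<union> {c..d} \<union> {a<..<b} \<subseteq> {..<length ps}"
    "{c..d} \<inter> {a..b} = {}" "({a} \<union> {c..d} \<union> {b}) \<inter> {a<..<b} = {}"
    using order by auto
qed

lemma two_blocks_if_arcs_ca_bd:
  assumes "(ps ! c, ps ! a) \<in> A" "(ps ! b, ps ! d) \<in> A"
  shows "contains_subdivision (set ps) A (two_blocks_V k1 k2) (two_blocks_A k1 k2)"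
proof (rule two_blocks_if_index_paths)
  let ?Q1 = "[ps ! c] @ segment ps a b @ [ps ! d]" and ?Q2 = "segment ps c d"
  have "dpath A (segment ps a b @ [ps ! d])"
    using assms order distinct
    by (intro dpath_append dpath_segment_ab dpath_singleton)
      (auto simp: last_segment set_segment nth_eq_iff_index_eq)
  then show "dpath A ?Q1"
    using assms order distinct
    by (intro dpath_append[OF dpath_singleton])
      (auto simp: hd_segment set_segment segment_not_Nil nth_eq_iff_index_eq)
  show "dpath A ?Q2"
    by (rule dpath_segment_cd)
  show "hd ?Q1 = hd ?Q2" "last ?Q1 = last ?Q2" "k1 < length ?Q1" "k1 < length ?Q2"
    using order spread by (auto simp: hd_segment last_segment segment_not_Nil length_segment)
  show "set ?Q1 = nth ps ` ({c} \<union> {a..b} \<union> {d})" "set ?Q2 = nth ps ` {c..d}"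
    "inner ?Q1 = nth ps ` {a..b}" "inner ?Q2 = nth ps ` {c<..<d}"
    using order by (auto simp: set_segment inner_segment inner_Cons_snoc[of _ "segment _ _ _", simplified])
  show "({c} \<union> {a..b} \<union> {d}) \<union> {c..d} \<union> {a..b} \<union> {c<..<d} \<subseteq> {..<length ps}"
    "{a..b} \<inter> {c..d} = {}" "({c} \<union> {a..b} \<union> {d}) \<inter> {c<..<d} = {}"
    using order by auto
qed

lemma two_blocks_if_crossing:
  assumes "(ps ! a, ps ! c) \<in> A \<or> (ps ! c, ps ! a) \<in> A" "(ps ! b, ps ! d) \<in> A \<or> (ps ! d, ps ! b) \<in> A"
  shows "contains_subdivision (set ps) A (two_blocks_V k1 k2) (two_blocks_A k1 k2)"
  using assms two_blocks_if_arcs_ac_bd two_blocks_if_arcs_ca_db two_blocks_if_arcs_ac_db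
    two_blocks_if_arcs_ca_bd by blast

end

section \<open>Non-crossing graphs are 3-colourable\<close>

definition noncrossing :: "(nat \<Rightarrow> nat \<Rightarrow> bool) \<Rightarrow> nat set \<Rightarrow> bool" where
  "noncrossing G S \<longleftrightarrow>
     \<not> (\<exists>a\<in>S. \<exists>b\<in>S. \<exists>c\<in>S. \<exists>d\<in>S. a < b \<and> b < c \<and> c < d \<and> G a c \<and> G b d)"

definition spanning_edge :: "(nat \<Rightarrow> nat \<Rightarrow> bool) \<Rightarrow> nat set \<Rightarrow> nat \<Rightarrow> nat \<Rightarrow> bool" where
  "spanning_edge G S x y \<longleftrightarrow> x \<in> S \<and> y \<in> S \<and> x < y \<and> G x y \<and> (\<exists>z\<in>S. x < z \<and> z < y)"

lemma noncrossingI: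
  assumes "\<And>a b c d. a \<in> S \<Longrightarrow> b \<in> S \<Longrightarrow> c \<in> S \<Longrightarrow> d \<in> S \<Longrightarrow>
    a < b \<Longrightarrow> b < c \<Longrightarrow> c < d \<Longrightarrow> G a c \<Longrightarrow> G b d \<Longrightarrow> False"
  shows "noncrossing G S"
  using assms unfolding noncrossing_def by blast

lemma noncrossingD:
  "noncrossing G S \<Longrightarrow> a \<in> S \<Longrightarrow> b \<in> S \<Longrightarrow> c \<in> S \<Longrightarrow> d \<in> S \<Longrightarrow>
    a < b \<Longrightarrow> b < c \<Longrightarrow> c < d \<Longrightarrow> G a c \<Longrightarrow> G b d \<Longrightarrow> False"
  unfolding noncrossing_def by blast

lemma noncrossing_subset: "noncrossing G S \<Longrightarrow> T \<subseteq> S \<Longrightarrow> noncrossing G T"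
  unfolding noncrossing_def by blast

lemma neighbour_of_Min_if_no_spanning_edge:
  assumes "finite S" "irreflp G" "\<not> (\<exists>x y. spanning_edge G S x y)" "u \<in> S" "G (Min S) u"
  shows "u = Min {x \<in> S. Min S < x}"
proof (rule ccontr)
  assume "u \<noteq> Min {x \<in> S. Min S < x}"
  have "Min S \<in> S" "Min S \<le> u"
    using assms(1,4) by (auto intro: Min_in)
  moreover have "Min S \<noteq> u"
    using assms(2,5) irreflpD by metis
  ultimately have "u \<in> {x \<in> S. Min S < x}"
    using assms(4) by auto
  then have "Min {x \<in> S. Min S < x} \<in> {x \<in> S. Min S < x}" "Min {x \<in> S. Min S < x} \<le> u"
    using assms(1) by (intro Min_in Min_le; auto)+
  then have "spanning_edge G S (Min S) u"
    using \<open>Min S \<in> S\<close> \<open>u \<in> {x \<in> S. Min S < x}\<close> \<open>u \<noteq> Min {x \<in> S. Min S < x}\<close> assms(5)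
    by (auto simp: spanning_edge_def)
  then show False
    using assms(3) by blast
qed

text \<open>If \<open>(a, b)\<close> is a shortest spanning edge and \<open>c\<close> the first vertex it spans, an edge from
  \<open>c\<close> leaving \<open>[a, b]\<close> would cross \<open>(a, b)\<close>, and an edge from \<open>c\<close> to a later vertex of
  \<open>(c, b]\<close> other than the successor of \<open>c\<close> would be a shorter spanning edge.\<close>

lemma neighbour_inside_shortest_spanning_edge:
  assumes "finite S" "symp G" "irreflp G" "noncrossing G S"
    and ab: "spanning_edge G S a b" and shortest: "\<And>x y. spanning_edge G S x y \<Longrightarrow> b - a \<le> y - x"
    and c_def: "c = Min {x \<in> S. a < x \<and> x < b}"
    and u: "u \<in> S" "G c u"
  shows "u = a \<or> u = Min {x \<in> S. c < x}"
proof -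
  have a: "a \<in> S" "a < b" "G a b" and b: "b \<in> S"
    using ab by (auto simp: spanning_edge_def)
  have "c \<in> {x \<in> S. a < x \<and> x < b}"
    unfolding c_def using ab assms(1) by (intro Min_in) (auto simp: spanning_edge_def)
  then have c: "c \<in> S" "a < c" "c < b"
    by auto
  have c_min: "c \<le> x" if "x \<in> S" "a < x" "x < b" for x
    unfolding c_def using that assms(1) by (intro Min_le) auto
  define q where "q = Min {x \<in> S. c < x}"
  have "q \<in> {x \<in> S. c < x}"
    unfolding q_def using b c assms(1) by (intro Min_in) auto
  then have q: "q \<in> S" "c < q"
    by auto
  have q_min: "q \<le> x" if "x \<in> S" "c < x" for x
    unfolding q_def using that assms(1) by (intro Min_le) auto
  have "u \<noteq> c"
    using u assms(3) irreflpD by metis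
  then consider "u < a" | "u = a" | "a < u" "u < c" | "c < u" "u \<le> b" | "b < u"
    by linarith
  then show ?thesis
  proof cases
    case 1
    then show ?thesis
      using noncrossingD[OF assms(4) u(1) a(1) c(1) b] c a u(2) assms(2) by (auto dest: sympD)
  next
    case 2
    then show ?thesis by simp
  next
    case 3
    then show ?thesis
      using c_min[OF u(1)] c by simp
  next
    case 4
    have "u = q"
    proof (rule ccontr)
      assume "u \<noteq> q"
      then have "spanning_edge G S c u"
        using 4 q q_min[OF u(1)] c u by (fastforce simp: spanning_edge_def)
      then show False
        using shortest 4 c by fastforce
    qed
    then show ?thesis
      by (simp add: q_def)
  next
    case 5
    then show ?thesis
      using noncrossingD[OF assms(4) a(1) c(1) b u(1)] c a u(2) by simp
  qed
qed

lemma noncrossing_low_degree_vertex: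
  assumes "finite S" "S \<noteq> {}" "symp G" "irreflp G" "noncrossing G S"
  obtains v p q where "v \<in> S" "\<And>u. u \<in> S \<Longrightarrow> G v u \<Longrightarrow> u = p \<or> u = q"
proof (cases "\<exists>x y. spanning_edge G S x y")
  case False
  have "Min S \<in> S"
    using assms(1,2) by simp
  then show ?thesis
    using that neighbour_of_Min_if_no_spanning_edge[OF assms(1,4) False] by blast
next
  case True
  then obtain e where "spanning_edge G S (fst e) (snd e)"
    by auto
  then obtain a b where ab: "spanning_edge G S a b"
    and shortest: "\<And>x y. spanning_edge G S x y \<Longrightarrow> b - a \<le> y - x"
    using ex_has_least_nat[of "\<lambda>e. spanning_edge G S (fst e) (snd e)" e "\<lambda>e. snd e - fst e"]
    by (metis fst_conv snd_conv)
  define c where "c = Min {x \<in> S. a < x \<and> x < b}"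
  have "c \<in> S"
    using ab assms(1) Min_in[of "{x \<in> S. a < x \<and> x < b}"]
    by (auto simp: spanning_edge_def c_def)
  then show ?thesis
    using that neighbour_inside_shortest_spanning_edge[OF assms(1,3-5) ab shortest c_def] by blast
qed

lemma noncrossing_3_colourable:
  assumes "symp G" "irreflp G" "finite S" "noncrossing G S"
  shows "\<exists>h. (\<forall>x\<in>S. h x < (3::nat)) \<and> (\<forall>x\<in>S. \<forall>y\<in>S. G x y \<longrightarrow> h x \<noteq> h y)"
  using assms(3,4)
proof (induction S rule: finite_remove_induct)
  case empty
  then show ?case by simp
next
  case (remove S)
  obtain v p q where v: "v \<in> S" and few_neighbours: "\<And>u. u \<in> S \<Longrightarrow> G v u \<Longrightarrow> u = p \<or> u = q"
    using noncrossing_low_degree_vertex[OF remove.hyps(1,2) assms(1,2) remove.prems] by blast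
  obtain h where h: "\<forall>x\<in>S - {v}. h x < (3::nat)" "\<forall>x\<in>S - {v}. \<forall>y\<in>S - {v}. G x y \<longrightarrow> h x \<noteq> h y"
    using remove.IH[OF v] noncrossing_subset[OF remove.prems] by blast
  have "\<exists>colour::nat. colour < 3 \<and> colour \<noteq> h p \<and> colour \<noteq> h q"
    by presburger
  then obtain colour :: nat where colour: "colour < 3" "colour \<noteq> h p" "colour \<noteq> h q"
    by blast
  have "(h(v := colour)) x \<noteq> (h(v := colour)) y" if "x \<in> S" "y \<in> S" "G x y" for x y
  proof -
    have "x \<noteq> y"
      using that(3) assms(2) irreflpD by metis
    moreover have "y = p \<or> y = q" if "x = v"
      using few_neighbours \<open>y \<in> S\<close> \<open>G x y\<close> that by blast
    moreover have "x = p \<or> x = q" if "y = v"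
      using few_neighbours \<open>x \<in> S\<close> \<open>G x y\<close> that assms(1) by (blast dest: sympD)
    ultimately show ?thesis
      using h that colour by auto
  qed
  moreover have "\<forall>x\<in>S. (h(v := colour)) x < 3"
    using h colour by auto
  ultimately show ?case
    by blast
qed

section \<open>Colouring by residue classes along a Hamiltonian path\<close>

lemma le_diff_if_mod_eq:
  fixes a b k :: nat
  assumes "a < b" "a mod k = b mod k"
  shows "k \<le> b - a"
proof -
  have "k dvd b - a"
    using assms by (metis mod_eq_dvd_iff_nat less_imp_le)
  then show ?thesis
    using assms(1) by (simp add: dvd_imp_le)
qed

lemma residue_class_noncrossing:
  assumes "dpath A ps" "2 \<le> k1" "0 < k2" "k2 \<le> k1"
    and "\<not> contains_subdivision (set ps) A (two_blocks_V k1 k2) (two_blocks_A k1 k2)"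
  shows "noncrossing (\<lambda>i j. (ps ! i, ps ! j) \<in> A \<or> (ps ! j, ps ! i) \<in> A)
    {i. i < length ps \<and> i mod k1 = r}"
proof (rule noncrossingI)
  fix a b c d
  assume "a \<in> {i. i < length ps \<and> i mod k1 = r}" "b \<in> {i. i < length ps \<and> i mod k1 = r}"
    "c \<in> {i. i < length ps \<and> i mod k1 = r}" "d \<in> {i. i < length ps \<and> i mod k1 = r}"
    and "a < b" "b < c" "c < d"
    and crossing: "(ps ! a, ps ! c) \<in> A \<or> (ps ! c, ps ! a) \<in> A" "(ps ! b, ps ! d) \<in> A \<or> (ps ! d, ps ! b) \<in> A"
  then have mod: "a mod k1 = b mod k1" "c mod k1 = d mod k1" and "d < length ps"
    by auto
  have "k1 \<le> b - a" "k1 \<le> d - c"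
    using le_diff_if_mod_eq[OF \<open>a < b\<close> mod(1)] le_diff_if_mod_eq[OF \<open>c < d\<close> mod(2)] .
  then interpret spread_positions A ps k1 k2 a b c d
    using assms(1-4) \<open>a < b\<close> \<open>b < c\<close> \<open>c < d\<close> \<open>d < length ps\<close> by unfold_locales
  show False
    using two_blocks_if_crossing[OF crossing] assms(5) by blast
qed

lemma proper_colouring_by_classes:
  assumes "A \<subseteq> V \<times> V" "\<And>v. v \<in> V \<Longrightarrow> cls v < m"
    and "\<And>i. i < m \<Longrightarrow> \<exists>c. proper_colouring {v \<in> V. cls v = i} {(u, v) \<in> A. cls u = i \<and> cls v = i} k c"
  shows "\<exists>c. proper_colouring V A (k * m) c"
proof -
  have "\<forall>i\<in>{..<m}. \<exists>c.
      proper_colouring {v \<in> V. cls v = i} {(u, v) \<in> A. cls u = i \<and> cls v = i} k c"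
    using assms(3) by blast
  from bchoice[OF this] obtain C where C: "\<And>i. i < m \<Longrightarrow>
      proper_colouring {v \<in> V. cls v = i} {(u, v) \<in> A. cls u = i \<and> cls v = i} k (C i)"
    by blast
  define c where "c v = k * cls v + C (cls v) v" for v
  have C_less: "C (cls v) v < k" if "v \<in> V" for v
    using C[of "cls v"] assms(2) that by (auto simp: proper_colouring_def)
  have "c v < k * m" if "v \<in> V" for v
  proof -
    have "c v < k * Suc (cls v)"
      using C_less that by (simp add: c_def)
    also have "\<dots> \<le> k * m"
      using assms(2)[OF that] by (metis Suc_leI mult_le_mono2)
    finally show ?thesis .
  qed
  moreover have "c u \<noteq> c v" if "(u, v) \<in> A" for u v
  proof (cases "cls u = cls v")
    case True
    then show ?thesis
      using C[of "cls u"] that assms(1,2) by (fastforce simp: c_def proper_colouring_def)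
  next
    case False
    have "u \<in> V" "v \<in> V"
      using that assms(1) by auto
    then have "c u div k = cls u" "c v div k = cls v"
      using C_less[OF \<open>u \<in> V\<close>] C_less[OF \<open>v \<in> V\<close>] by (simp_all add: c_def)
    then show ?thesis
      using False by auto
  qed
  ultimately show ?thesis
    unfolding proper_colouring_def by blast
qed

lemma proper_colouring_if_noncrossing_residue_classes:
  assumes "digraph V A" "dpath A ps" "set ps = V" "0 < m"
    and "\<And>r. noncrossing (\<lambda>i j. (ps ! i, ps ! j) \<in> A \<or> (ps ! j, ps ! i) \<in> A)
      {i. i < length ps \<and> i mod m = r}"
  shows "\<exists>c. proper_colouring V A (3 * m) c"
proof -
  define G where "G i j \<longleftrightarrow> (ps ! i, ps ! j) \<in> A \<or> (ps ! j, ps ! i) \<in> A" for i j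
  have "symp G" "irreflp G"
    using assms(1) by (auto simp: G_def symp_def irreflp_def digraph_def)
  have "\<forall>v\<in>V. \<exists>i. i < length ps \<and> ps ! i = v"
    using assms(3) by (auto simp: in_set_conv_nth)
  from bchoice[OF this] obtain pos where pos: "\<forall>v\<in>V. pos v < length ps \<and> ps ! pos v = v"
    by blast
  show ?thesis
  proof (rule proper_colouring_by_classes[where cls = "\<lambda>v. pos v mod m"])
    show "A \<subseteq> V \<times> V"
      using assms(1) by (simp add: digraph_def)
    show "pos v mod m < m" for v
      using assms(4) by simp
    fix r
    obtain h :: "nat \<Rightarrow> nat" where h: "\<forall>x\<in>{i. i < length ps \<and> i mod m = r}. h x < 3"
      "\<forall>x\<in>{i. i < length ps \<and> i mod m = r}. \<forall>y\<in>{i. i < length ps \<and> i mod m = r}.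
         G x y \<longrightarrow> h x \<noteq> h y"
      using noncrossing_3_colourable[OF \<open>symp G\<close> \<open>irreflp G\<close> _ assms(5)[of r, folded G_def]]
      by auto
    have "(h \<circ> pos) ` {v \<in> V. pos v mod m = r} \<subseteq> {..<3}"
      using h(1) pos by auto
    moreover have "(h \<circ> pos) u \<noteq> (h \<circ> pos) v"
      if "(u, v) \<in> A" "pos u mod m = r" "pos v mod m = r" for u v
    proof -
      have "u \<in> V" "v \<in> V"
        using that(1) assms(1) by (auto simp: digraph_def)
      then have "G (pos u) (pos v)"
        using that(1) pos by (simp add: G_def)
      then show ?thesis
        using h(2) pos \<open>u \<in> V\<close> \<open>v \<in> V\<close> that(2,3) by simp
    qed
    ultimately have "proper_colouring {v \<in> V. pos v mod m = r}
      {(u, v) \<in> A. pos u mod m = r \<and> pos v mod m = r} 3 (h \<circ> pos)"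
      unfolding proper_colouring_def by auto
    then show "\<exists>c. proper_colouring {v \<in> V. pos v mod m = r}
      {(u, v) \<in> A. pos u mod m = r \<and> pos v mod m = r} 3 c"
      by blast
  qed
qed

theorem theorem7:
  fixes V :: "'a set" and A :: "('a \<times> 'a) set" and k1 k2 :: nat
  assumes "digraph V A"
    and "k1 \<ge> k2" and "k2 \<ge> 2"
    and "\<exists>ps. hamiltonian_dpath V A ps"
    and "\<not> contains_subdivision V A (two_blocks_V k1 k2) (two_blocks_A k1 k2)"
  shows "chromatic_number V A \<le> 3 * k1"
proof -
  obtain ps where ps: "dpath A ps" "set ps = V"
    using assms(4) by (auto simp: hamiltonian_dpath_def)
  have noncrossing: "noncrossing (\<lambda>i j. (ps ! i, ps ! j) \<in> A \<or> (ps ! j, ps ! i) \<in> A)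
      {i. i < length ps \<and> i mod k1 = r}" for r
    using assms(2,3,5) unfolding ps(2)[symmetric]
    by (intro residue_class_noncrossing[OF ps(1)]) auto
  have "0 < k1"
    using assms(2,3) by simp
  then have "\<exists>c. proper_colouring V A (3 * k1) c"
    by (rule proper_colouring_if_noncrossing_residue_classes[OF assms(1) ps _ noncrossing])
  then show ?thesis
    unfolding chromatic_number_def by (rule Least_le)
qed

end
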